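(* Let $r,r'\ge 1$ be integers, let $P:[r]^2\to\{0,1\}$ and $P':[r']^2\to\{0,1\}$ be binary predicates, and let $V$ be a finite set with $n=|V|$. Suppose there is a function $f_P:\mathrm{Part}_r(V)\to\mathrm{Part}_{r'}(V^\gamma)$ such that for every weighted directed graph $G$ on vertex set $V$ and every $\mathcal{A}\in\mathrm{Part}_r(V)$, $$\mathrm{Val}_{G,P}(\mathcal{A})=\mathrm{Val}_{\gamma(G),P'}(f_P(\mathcal{A})),$$ where $\gamma(G)$ is the bipartite double cover of $G$. Let $G$ be a weighted directed graph on $V$ and $0<\varepsilon<1$. If there is an $\varepsilon$-$P'$-sparsifier of $\gamma(G)$ with $g(n)$ edges, then there is an $\varepsilon$-$P$-sparsifier of $G$ with $g(n)$ edges.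
   Context: $[r]=\{0,1,\dots,r-1\}$. A weighted directed graph $G=(V,E,w)$ has $E$ a set of ordered pairs of distinct vertices and $w:E\to\mathbb{R}_{>0}$. Its bipartite double cover is $\gamma(G)=(V^\gamma,E^\gamma,w^\gamma)$ with $V^\gamma=\{v^{(0)},v^{(1)}:v\in V\}$ (two copies of each vertex), $E^\gamma=\{(u^{(0)},v^{(1)}):(u,v)\in E\}$, $w^\gamma(u^{(0)},v^{(1)})=w(u,v)$; note $V^\gamma$ depends only on $V$. $\mathrm{Part}_r(X)$ is the set of ordered $r$-tuples $(A_0,\dots,A_{r-1})$ of pairwise disjoint, possibly empty, subsets of $X$ with union $X$; these correspond bijectively to assignments $A:X\to[r]$ via $A_j=A^{-1}(j)$. For a predicate $Q:[s]^2\to\{0,1\}$, a weighted directed graph $G=(X,E,w)$ and $\mathcal{A}\in\mathrm{Part}_s(X)$ with corresponding assignment $A$, $\mathrm{Val}_{G,Q}(\mathcal{A})=\sum_{(u,v)\in E}w(u,v)Q(A(u),A(v))$. An $\varepsilon$-$Q$-sparsifier of $G=(X,E,w)$ is a graph $G_\varepsilon=(X,E_\varepsilon,w_\varepsilon)$ with $E_\varepsilon\subseteq E$, $w_\varepsilon:E_\varepsilon\to\mathbb{R}_{>0}$, such that for all $\mathcal{A}\in\mathrm{Part}_s(X)$, $(1-\varepsilon)\mathrm{Val}_{G,Q}(\mathcal{A})\le\mathrm{Val}_{G_\varepsilon,Q}(\mathcal{A})\le(1+\varepsilon)\mathrm{Val}_{G,Q}(\mathcal{A})$; its number of edges is $|E_\varepsilon|$.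 *)

theory Defs
  imports Complex_Main "HOL-Library.FuncSet"
begin

text \<open>A weighted directed graph (X, E, w): E a set of ordered pairs of distinct
  vertices of X, w positive on E (values of w outside E are irrelevant).\<close>
definition wdg :: "'a set \<Rightarrow> ('a \<times> 'a) set \<Rightarrow> ('a \<times> 'a \<Rightarrow> real) \<Rightarrow> bool" where
  "wdg X E w \<longleftrightarrow> E \<subseteq> {(u, v). u \<in> X \<and> v \<in> X \<and> u \<noteq> v} \<and> (\<forall>e\<in>E. w e > 0)"

text \<open>Part_r(X), represented by the corresponding assignments A : X \<rightarrow> [r]
  (extensional, so the correspondence with ordered r-tuples of sets is bijective).\<close>
definition Part :: "nat \<Rightarrow> 'a set \<Rightarrow> ('a \<Rightarrow> nat) set" where
  "Part r X = X \<rightarrow>\<^sub>E {..<r}"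

definition Val :: "('a \<times> 'a) set \<Rightarrow> ('a \<times> 'a \<Rightarrow> real) \<Rightarrow> (nat \<Rightarrow> nat \<Rightarrow> bool) \<Rightarrow> ('a \<Rightarrow> nat) \<Rightarrow> real" where
  "Val E w Q A = (\<Sum>(u, v)\<in>E. w (u, v) * (if Q (A u) (A v) then 1 else 0))"

text \<open>Bipartite double cover; v^(i) is represented as (v, i) with i \<in> {0,1}.\<close>
definition gammaV :: "'a set \<Rightarrow> ('a \<times> nat) set" where
  "gammaV V = V \<times> {0, 1}"

definition gammaE :: "('a \<times> 'a) set \<Rightarrow> (('a \<times> nat) \<times> ('a \<times> nat)) set" where
  "gammaE E = {((u, 0), (v, 1)) | u v. (u, v) \<in> E}"

definition gammaW :: "('a \<times> 'a \<Rightarrow> real) \<Rightarrow> (('a \<times> nat) \<times> ('a \<times> nat) \<Rightarrow> real)" where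
  "gammaW w = (\<lambda>((u, i), (v, j)). w (u, v))"

definition is_sparsifier ::
  "nat \<Rightarrow> (nat \<Rightarrow> nat \<Rightarrow> bool) \<Rightarrow> real \<Rightarrow> 'a set \<Rightarrow> ('a \<times> 'a) set \<Rightarrow> ('a \<times> 'a \<Rightarrow> real)
    \<Rightarrow> ('a \<times> 'a) set \<Rightarrow> ('a \<times> 'a \<Rightarrow> real) \<Rightarrow> bool" where
  "is_sparsifier s Q eps X E w E' w' \<longleftrightarrow>
     E' \<subseteq> E \<and> (\<forall>e\<in>E'. w' e > 0) \<and>
     (\<forall>A\<in>Part s X. (1 - eps) * Val E w Q A \<le> Val E' w' Q A \<and>
                    Val E' w' Q A \<le> (1 + eps) * Val E w Q A)"

end

theory Submission
  imports Defs
begin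

text \<open>Every subgraph of \<open>\<gamma>(G)\<close> is the double cover \<open>\<gamma>(F)\<close> of a subgraph \<open>F\<close> of \<open>G\<close> with
  the same number of edges, and \<open>F\<close> can carry the weights of the subgraph of \<open>\<gamma>(G)\<close>.
  Since the value identity of \<open>f\<^sub>P\<close> holds for every graph on \<open>V\<close>, it applies to \<open>F\<close> as
  well as to \<open>G\<close>, so the sparsifier inequalities for \<open>P'\<close> on \<open>\<gamma>(G)\<close> become the
  sparsifier inequalities for \<open>P\<close> on \<open>G\<close>.\<close>

definition cover_edge :: "'a \<times> 'a \<Rightarrow> ('a \<times> nat) \<times> ('a \<times> nat)" where
  "cover_edge = (\<lambda>(u, v). ((u, 0), (v, 1)))"

lemma inj_cover_edge: "inj cover_edge"
  unfolding cover_edge_def by (auto simp: inj_on_def)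

lemma gammaE_eq_image: "gammaE E = cover_edge ` E"
  unfolding gammaE_def cover_edge_def by auto

lemma gammaW_cover_edge [simp]: "gammaW w (cover_edge e) = w e"
  unfolding gammaW_def cover_edge_def by (auto split: prod.split)

lemma card_gammaE: "card (gammaE E) = card E"
  unfolding gammaE_eq_image by (rule card_image[OF inj_on_subset[OF inj_cover_edge]]) simp

lemma subset_gammaE_obtain:
  assumes "E' \<subseteq> gammaE E"
  obtains F where "F \<subseteq> E" and "E' = gammaE F"
  using assms unfolding gammaE_eq_image by (auto simp: subset_image_iff)

lemma Val_gammaE_gammaW_comp:
  "Val (gammaE F) (gammaW (w \<circ> cover_edge)) Q B = Val (gammaE F) w Q B"
  unfolding Val_def gammaE_eq_image by (intro sum.cong) auto

lemma wdg_subgraph: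
  assumes "wdg X E w" and "F \<subseteq> E" and "\<forall>e\<in>F. w' e > 0"
  shows "wdg X F w'"
  using assms unfolding wdg_def by blast

lemma is_sparsifier_transfer:
  assumes sp: "is_sparsifier r' P' eps Y E2 w2 F2 wF2"
    and "F \<subseteq> E" and "\<forall>e\<in>F. wF e > 0"
    and part: "\<And>A. A \<in> Part r X \<Longrightarrow> f A \<in> Part r' Y"
    and val: "\<And>A. A \<in> Part r X \<Longrightarrow> Val E w P A = Val E2 w2 P' (f A)"
    and val_sub: "\<And>A. A \<in> Part r X \<Longrightarrow> Val F wF P A = Val F2 wF2 P' (f A)"
  shows "is_sparsifier r P eps X E w F wF"
  unfolding is_sparsifier_def
proof (intro conjI ballI)
  fix A assume "A \<in> Part r X"
  with sp part val val_sub
  show "(1 - eps) * Val E w P A \<le> Val F wF P A" and "Val F wF P A \<le> (1 + eps) * Val E w P A"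
    unfolding is_sparsifier_def by auto
qed (use assms in auto)

theorem proposition5:
  fixes r r' :: nat and P P' :: "nat \<Rightarrow> nat \<Rightarrow> bool" and V :: "'v set"
    and fP :: "('v \<Rightarrow> nat) \<Rightarrow> ('v \<times> nat \<Rightarrow> nat)"
    and E :: "('v \<times> 'v) set" and w :: "'v \<times> 'v \<Rightarrow> real"
    and eps :: real and g :: "nat \<Rightarrow> nat"
  assumes "r \<ge> 1" and "r' \<ge> 1" and "finite V"
    and fP_part: "\<forall>A\<in>Part r V. fP A \<in> Part r' (gammaV V)"
    and fP_val: "\<forall>E0 w0. wdg V E0 w0 \<longrightarrow>
        (\<forall>A\<in>Part r V. Val E0 w0 P A = Val (gammaE E0) (gammaW w0) P' (fP A))"
    and G: "wdg V E w"
    and "0 < eps" and "eps < 1"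
    and "\<exists>E' w'. is_sparsifier r' P' eps (gammaV V) (gammaE E) (gammaW w) E' w'
                 \<and> card E' = g (card V)"
  shows "\<exists>E' w'. is_sparsifier r P eps V E w E' w' \<and> card E' = g (card V)"
proof -
  obtain E' w' where sp: "is_sparsifier r' P' eps (gammaV V) (gammaE E) (gammaW w) E' w'"
    and card_E': "card E' = g (card V)"
    using assms(9) by blast
  obtain F where "F \<subseteq> E" and E'_eq: "E' = gammaE F"
    using sp subset_gammaE_obtain unfolding is_sparsifier_def by blast
  define wF where "wF = w' \<circ> cover_edge"
  have wF_pos: "\<forall>e\<in>F. wF e > 0"
    using sp unfolding is_sparsifier_def wF_def E'_eq gammaE_eq_image by auto
  have "wdg V F wF"
    using G \<open>F \<subseteq> E\<close> wF_pos by (rule wdg_subgraph)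
  then have "is_sparsifier r P eps V E w F wF"
    using sp \<open>F \<subseteq> E\<close> wF_pos fP_part fP_val G
    by (intro is_sparsifier_transfer[where f = fP])
       (auto simp: E'_eq wF_def Val_gammaE_gammaW_comp)
  moreover have "card F = g (card V)"
    using card_E' by (simp add: E'_eq card_gammaE)
  ultimately show ?thesis by blast
qed

end
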